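(* Let $c:\mathbb{Q}\times\mathbb{Q}\to\mathbb{Q}$ (the controller) be any function such that for all $x,y\in\mathbb{Q}$ with $|x|\le 3.25$ and $|y|\le 3.25$ we have $|c(x,y)+2x-y|<1.25$. Consider the discrete-time system whose states are quadruples $(w,p,v,s)\in\mathbb{Q}^4$ (wind speed, position on the $y$-axis, velocity in the $y$-direction, most recent sensor reading), starting from the initial state $(w_0,p_0,v_0,s_0)=(0,0,0,0)$. An observation is a pair $(\delta,\varepsilon)\in\mathbb{Q}^2$ (wind shift, sensor error), and an observation $(\delta,\varepsilon)$ transforms a state $(w,p,v,s)$ into $(w',p',v',s')$ where $w'=w+\delta$, $p'=p+v+w'$, $s'=p'+\varepsilon$, $v'=v+c(s',s)$. Then for every finite sequence of observations $(\delta_1,\varepsilon_1),\dots,(\delta_k,\varepsilon_k)$ ($k\ge 0$) satisfying $|\delta_i|\le 1$ and $|\varepsilon_i|\le 0.25$ for all $i$, the state reached after applying these observations in turn has position $p$ with $|p|\le 3$; i.e. the car never leaves the road.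
   Context: The model describes a car travelling along a straight road of width 6 parallel to the $x$-axis (so being on the road means the $y$-position satisfies $|p|\le 3$), subject to a cross-wind perpendicular to the road, with a noisy position sensor; at each step the controller receives the current and previous sensor readings and outputs a change in the car's $y$-velocity. Informally: if the wind speed never shifts by more than 1 per unit time and the sensor is never off by more than 0.25, then the car never leaves the road. *)

theory Defs
  imports Complex_Main
begin

type_synonym state = "rat \<times> rat \<times> rat \<times> rat"

definition step :: "(rat \<Rightarrow> rat \<Rightarrow> rat) \<Rightarrow> state \<Rightarrow> rat \<times> rat \<Rightarrow> state" where
  "step c st ob =
     (case st of (w, p, v, s) \<Rightarrow> case ob of (d, e) \<Rightarrow>
        let w' = w + d; p' = p + v + w'; s' = p' + e; v' = v + c s' s
        in (w', p', v', s'))"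

definition run :: "(rat \<Rightarrow> rat \<Rightarrow> rat) \<Rightarrow> (rat \<times> rat) list \<Rightarrow> state" where
  "run c obs = foldl (step c) (0, 0, 0, 0) obs"

definition pos :: "state \<Rightarrow> rat" where
  "pos st = fst (snd st)"

end

theory Submission
  imports Defs
begin

text \<open>The state satisfies \<open>|p| \<le> 3\<close>, \<open>|s - p| \<le> 1/4\<close> and \<open>|v + w + 2 s - p| < 3/2\<close>
  throughout. Indeed, the next position is \<open>p' = (v + w + 2 s - p) - 2 (s - p) + d\<close>, so
  \<open>|p'| < 3/2 + 1/2 + 1 = 3\<close>; and the new value of \<open>v + w + 2 s - p\<close> is the controller error
  \<open>c s' s + 2 s' - s\<close> plus the old sensor error \<open>s - p\<close>, so it stays below \<open>5/4 + 1/4\<close>.\<close>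

definition safe_state :: "state \<Rightarrow> bool" where
  "safe_state st = (case st of (w, p, v, s) \<Rightarrow>
     \<bar>p\<bar> \<le> 3 \<and> \<bar>s - p\<bar> \<le> 1/4 \<and> \<bar>v + w + 2 * s - p\<bar> < 3/2)"

lemma foldl_invariant:
  assumes "P x" and "\<And>x y. P x \<Longrightarrow> y \<in> set ys \<Longrightarrow> P (f x y)"
  shows "P (foldl f x ys)"
  using assms by (induction ys arbitrary: x) auto

lemma step_unfold:
  "step c (w, p, v, s) (d, e) =
     (let p' = p + v + w + d in (w + d, p', v + c (p' + e) s, p' + e))"
  by (simp add: step_def Let_def algebra_simps)

lemma safe_state_step:
  fixes c :: "rat \<Rightarrow> rat \<Rightarrow> rat"
  assumes ctrl: "\<And>x y. \<bar>x\<bar> \<le> 13/4 \<Longrightarrow> \<bar>y\<bar> \<le> 13/4 \<Longrightarrow> \<bar>c x y + 2 * x - y\<bar> < 5/4"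
    and safe: "safe_state (w, p, v, s)" and d: "\<bar>d\<bar> \<le> 1" and e: "\<bar>e\<bar> \<le> 1/4"
  shows "safe_state (step c (w, p, v, s) (d, e))"
proof -
  define q where "q = v + w + 2 * s - p"
  define p' where "p' = p + v + w + d"
  define s' where "s' = p' + e"
  have p: "\<bar>p\<bar> \<le> 3" and sp: "\<bar>s - p\<bar> \<le> 1/4" and q: "\<bar>q\<bar> < 3/2"
    using safe by (simp_all add: safe_state_def q_def)
  have "p' = q - 2 * s + 2 * p + d"
    by (simp add: p'_def q_def algebra_simps)
  then have p': "\<bar>p'\<bar> \<le> 3"
    using q sp d by linarith
  have "\<bar>s'\<bar> \<le> 13/4" "\<bar>s\<bar> \<le> 13/4"
    using p' e p sp unfolding s'_def by linarith+
  then have err: "\<bar>c s' s + 2 * s' - s\<bar> < 5/4"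
    using ctrl by blast
  have "(v + c s' s) + (w + d) + 2 * s' - p' = (c s' s + 2 * s' - s) + (s - p)"
    by (simp add: p'_def algebra_simps)
  then have "\<bar>(v + c s' s) + (w + d) + 2 * s' - p'\<bar> < 3/2"
    using err sp by linarith
  moreover have "\<bar>s' - p'\<bar> \<le> 1/4"
    using e by (simp add: s'_def)
  ultimately show ?thesis
    using p'
    by (simp add: step_unfold safe_state_def Let_def p'_def [symmetric] s'_def [symmetric])
qed

theorem theorem1:
  fixes c :: "rat \<Rightarrow> rat \<Rightarrow> rat"
  assumes ctrl: "\<And>x y. \<bar>x\<bar> \<le> 13/4 \<Longrightarrow> \<bar>y\<bar> \<le> 13/4 \<Longrightarrow> \<bar>c x y + 2 * x - y\<bar> < 5/4"
  and obs: "\<And>d e. (d, e) \<in> set obs \<Longrightarrow> \<bar>d\<bar> \<le> 1 \<and> \<bar>e\<bar> \<le> 1/4"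
  shows "\<bar>pos (run c obs)\<bar> \<le> 3"
proof -
  have "safe_state (run c obs)"
    unfolding run_def
  proof (rule foldl_invariant)
    show "safe_state (0, 0, 0, 0)"
      by (simp add: safe_state_def)
    show "safe_state (step c st ob)" if "safe_state st" and "ob \<in> set obs" for st ob
      using that safe_state_step [OF ctrl] obs
      by (cases st, cases ob) blast
  qed
  then show ?thesis
    by (cases "run c obs") (simp add: safe_state_def pos_def)
qed

end
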